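(* Let $\mathcal Y$ be a finite set, $\mathcal W\subseteq\mathbb{R}^D$ a convex set, $f_i:\mathcal Y\times\mathbb{R}^D\to\mathbb{R}$ ($i=1,\dots,n$) functions convex and differentiable in $w$ with Lipschitz continuous gradients, and $r:\mathbb{R}^D\to\mathbb{R}$ strongly convex and differentiable with Lipschitz continuous gradient, such that each $g_i(w):=r(w)+\max_{y\in\mathcal Y}f_i(y,w)$ is $\mu$-strongly convex on $\mathcal W$. Suppose there exists $w_0\in\mathcal W$ with $g_i(w_0)=0$ for all $i$, and let $$\Delta=\max_{w,i,j,y}\big|\partial_j[r(w)+f_i(y,w)]\big|,$$ where the maximum ranges over all indices $i$, all $y\in\mathcal Y$, all $w\in\mathcal W$ and all coordinates $j$ of $w$. Then: (a) for any $w_1,w_2\in\mathcal W$, $\|w_1-w_2\|\le\frac{2\sqrt D\,\Delta}{\mu}$; (b) for any index $i$ and any $w\in\mathcal W$, $|g_i(w)|\le\frac{2D\Delta^2}{\mu}$.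
   Context: $\partial_j$ denotes the partial derivative with respect to the $j$-th coordinate of $w$. *)

theory Defs
  imports "HOL-Analysis.Analysis"
begin

definition partial_deriv :: "'D::finite \<Rightarrow> (real^'D \<Rightarrow> real) \<Rightarrow> real^'D \<Rightarrow> real" where
  "partial_deriv j h w = frechet_derivative h (at w) (axis j 1)"

definition grad :: "(real^'D::finite \<Rightarrow> real) \<Rightarrow> real^'D \<Rightarrow> real^'D" where
  "grad h w = (\<chi> j. partial_deriv j h w)"

definition strongly_convex_on :: "real \<Rightarrow> 'a::real_normed_vector set \<Rightarrow> ('a \<Rightarrow> real) \<Rightarrow> bool" where
  "strongly_convex_on mu S h \<longleftrightarrow>
     (\<forall>x\<in>S. \<forall>y\<in>S. \<forall>t::real. 0 \<le> t \<and> t \<le> 1 \<longrightarrow>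
        h (t *\<^sub>R x + (1 - t) *\<^sub>R y) \<le> t * h x + (1 - t) * h y - mu / 2 * t * (1 - t) * (norm (x - y))\<^sup>2)"

end

theory Submission
  imports Defs
begin

text \<open>Bounding every partial derivative of \<open>r + f i y\<close> by \<open>\<Delta>\<close> makes each of these functions
  \<open>\<surd>D \<Delta>\<close>-Lipschitz on the convex set \<open>W\<close>, hence so is their pointwise maximum \<open>g i\<close>. A
  \<open>\<mu>\<close>-strongly convex \<open>G\<close>-Lipschitz function can only live on a set of diameter at most
  \<open>2G/\<mu>\<close>: comparing it at \<open>x\<close>, \<open>z\<close> and at a point on the segment between them, the quadratic
  gain from strong convexity must be paid for by the linear Lipschitz term. This is (a);
  (b) follows since \<open>g i\<close> vanishes at \<open>w\<^sub>0\<close>, so \<open>|g i w| \<le> G \<parallel>w - w\<^sub>0\<parallel> \<le> 2G\<^sup>2/\<mu>\<close>.\<close>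

lemma norm_vec_le_sqrt_card:
  fixes x :: "real^'n"
  assumes "\<And>i. \<bar>x $ i\<bar> \<le> B"
  shows "norm x \<le> sqrt (real CARD('n)) * B"
proof -
  have "norm x \<le> L2_set (\<lambda>i::'n. B) UNIV"
    unfolding norm_vec_def by (rule L2_set_mono) (use assms in auto)
  also have "\<dots> = sqrt (real CARD('n)) * B"
    using assms[of undefined] by (simp add: L2_set_constant)
  finally show ?thesis .
qed

lemma frechet_derivative_eq_inner_grad:
  fixes h :: "real^'n \<Rightarrow> real"
  assumes "h differentiable (at w)"
  shows "frechet_derivative h (at w) = (\<lambda>v. grad h w \<bullet> v)"
proof
  fix v :: "real^'n"
  have "frechet_derivative h (at w) v = frechet_derivative h (at w) (\<Sum>j\<in>UNIV. v $ j *\<^sub>R axis j 1)"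
    by (simp add: basis_expansion scalar_mult_eq_scaleR[symmetric])
  also have "\<dots> = (\<Sum>j\<in>UNIV. v $ j * partial_deriv j h w)"
    using linear_frechet_derivative[OF assms]
    by (simp add: linear_sum linear_scale partial_deriv_def)
  also have "\<dots> = grad h w \<bullet> v"
    by (simp add: inner_vec_def grad_def mult.commute)
  finally show "frechet_derivative h (at w) v = grad h w \<bullet> v" .
qed

lemma lipschitz_on_partial_deriv_bound:
  fixes h :: "real^'n \<Rightarrow> real"
  assumes "convex W" and diff: "\<And>w. w \<in> W \<Longrightarrow> h differentiable (at w)"
    and bound: "\<And>j w. w \<in> W \<Longrightarrow> \<bar>partial_deriv j h w\<bar> \<le> B" and "0 \<le> B"
  shows "(sqrt (real CARD('n)) * B)-lipschitz_on W h"
proof (rule bounded_derivative_imp_lipschitz[OF _ \<open>convex W\<close>])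
  fix w assume "w \<in> W"
  show "(h has_derivative frechet_derivative h (at w)) (at w within W)"
    using diff[OF \<open>w \<in> W\<close>] frechet_derivative_works has_derivative_at_withinI by blast
  have "onorm (\<lambda>v. grad h w \<bullet> v) \<le> norm (grad h w)"
    using onorm_inner_right[OF bounded_linear_ident, of "grad h w"] by (simp add: onorm_id)
  also have "\<dots> \<le> sqrt (real CARD('n)) * B"
    using bound[OF \<open>w \<in> W\<close>] by (intro norm_vec_le_sqrt_card) (simp add: grad_def)
  finally show "onorm (frechet_derivative h (at w)) \<le> sqrt (real CARD('n)) * B"
    by (simp add: frechet_derivative_eq_inner_grad[OF diff[OF \<open>w \<in> W\<close>]])
qed (use \<open>0 \<le> B\<close> in simp)

lemma lipschitz_on_Max_image:
  fixes a :: "'y \<Rightarrow> 'a::metric_space \<Rightarrow> real"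
  assumes "finite Y" "Y \<noteq> {}" and lip: "\<And>y. y \<in> Y \<Longrightarrow> L-lipschitz_on W (a y)" and "0 \<le> L"
  shows "L-lipschitz_on W (\<lambda>w. Max ((\<lambda>y. a y w) ` Y))"
proof -
  have one_sided: "Max ((\<lambda>y. a y x) ` Y) \<le> Max ((\<lambda>y. a y z) ` Y) + L * dist x z"
    if "x \<in> W" "z \<in> W" for x z
  proof -
    have "Max ((\<lambda>y. a y x) ` Y) \<in> (\<lambda>y. a y x) ` Y"
      using assms(1,2) by (intro Max_in) auto
    then obtain y where "y \<in> Y" and y_max: "Max ((\<lambda>y. a y x) ` Y) = a y x"
      by auto
    have "a y x \<le> a y z + L * dist x z"
      using lipschitz_onD[OF lip[OF \<open>y \<in> Y\<close>] that] by (simp add: dist_real_def)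
    also have "a y z \<le> Max ((\<lambda>y. a y z) ` Y)"
      using \<open>y \<in> Y\<close> assms(1) by simp
    finally show ?thesis
      using y_max by simp
  qed
  show ?thesis
    using one_sided \<open>0 \<le> L\<close>
    by (intro lipschitz_onI) (fastforce simp: dist_real_def dist_commute abs_le_iff)+
qed

lemma strongly_convex_on_lipschitz_gap:
  fixes h :: "'a::real_normed_vector \<Rightarrow> real"
  assumes "convex W" and sc: "strongly_convex_on mu W h" and lip: "G-lipschitz_on W h"
    and "x \<in> W" "z \<in> W" "0 < t" "t < 1"
  shows "mu / 2 * (1 - t) * (norm (x - z))\<^sup>2 \<le> h x - h z + G * norm (x - z)"
proof -
  define p where "p = t *\<^sub>R x + (1 - t) *\<^sub>R z"
  have "p \<in> W"
    unfolding p_def using assms by (intro convexD) auto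
  have "norm (z - p) = t * norm (x - z)"
  proof -
    have "z - p = t *\<^sub>R (z - x)" unfolding p_def by (simp add: algebra_simps)
    then show ?thesis using \<open>0 < t\<close> by (simp add: norm_minus_commute)
  qed
  then have "h z \<le> h p + G * (t * norm (x - z))"
    using lipschitz_on_normD[OF lip \<open>z \<in> W\<close> \<open>p \<in> W\<close>] by simp
  moreover have "h p \<le> t * h x + (1 - t) * h z - mu / 2 * t * (1 - t) * (norm (x - z))\<^sup>2"
    using sc assms unfolding strongly_convex_on_def p_def by auto
  ultimately have "t * (mu / 2 * (1 - t) * (norm (x - z))\<^sup>2) \<le> t * (h x - h z + G * norm (x - z))"
    by (simp add: algebra_simps)
  then show ?thesis
    using \<open>0 < t\<close> by simp
qed

lemma strongly_convex_on_lipschitz_diameter: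
  fixes h :: "'a::real_normed_vector \<Rightarrow> real"
  assumes "convex W" and sc: "strongly_convex_on mu W h" and lip: "G-lipschitz_on W h"
    and "0 < mu" "x \<in> W" "z \<in> W"
  shows "norm (x - z) \<le> 2 * G / mu"
proof -
  define d where "d = norm (x - z)"
  have "s * (mu * d\<^sup>2) \<le> 2 * G * d" if "0 < s" "s < 1" for s
    using strongly_convex_on_lipschitz_gap[OF \<open>convex W\<close> sc lip \<open>x \<in> W\<close> \<open>z \<in> W\<close>, of "1 - s"]
      strongly_convex_on_lipschitz_gap[OF \<open>convex W\<close> sc lip \<open>z \<in> W\<close> \<open>x \<in> W\<close>, of "1 - s"] that
    by (simp add: d_def norm_minus_commute algebra_simps)
  then have "mu * d\<^sup>2 \<le> 2 * G * d"
    by (rule field_le_mult_one_interval)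
  then have "mu * d \<le> 2 * G" if "d > 0"
    using that by (simp add: power2_eq_square)
  moreover have "0 \<le> G"
    using lipschitz_on_nonneg[OF lip] .
  ultimately show ?thesis
    using \<open>0 < mu\<close> by (cases "d = 0") (auto simp: d_def field_simps)
qed

theorem mainTheorem3:
  fixes Y :: "'y set" and W :: "(real^'D::finite) set"
    and f :: "nat \<Rightarrow> 'y \<Rightarrow> real^'D \<Rightarrow> real" and r :: "real^'D \<Rightarrow> real"
    and n :: nat and mu Delta :: real and w0 :: "real^'D"
  defines "g \<equiv> (\<lambda>i w. r w + Max ((\<lambda>y. f i y w) ` Y))"
  assumes Y_fin: "finite Y" and Y_ne: "Y \<noteq> {}"
    and W_conv: "convex W"
    and f_convex: "\<And>i y. i \<in> {1..n} \<Longrightarrow> y \<in> Y \<Longrightarrow> convex_on UNIV (f i y)"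
    and f_diff: "\<And>i y w. i \<in> {1..n} \<Longrightarrow> y \<in> Y \<Longrightarrow> f i y differentiable (at w)"
    and f_lip: "\<And>i y. i \<in> {1..n} \<Longrightarrow> y \<in> Y \<Longrightarrow> \<exists>L. L-lipschitz_on UNIV (grad (f i y))"
    and r_sc: "\<exists>c>0. strongly_convex_on c UNIV r"
    and r_diff: "\<And>w. r differentiable (at w)"
    and r_lip: "\<exists>L. L-lipschitz_on UNIV (grad r)"
    and mu_pos: "mu > 0"
    and g_sc: "\<And>i. i \<in> {1..n} \<Longrightarrow> strongly_convex_on mu W (g i)"
    and w0: "w0 \<in> W" "\<And>i. i \<in> {1..n} \<Longrightarrow> g i w0 = 0"
    and Delta_mem: "Delta \<in> {\<bar>partial_deriv j (\<lambda>v. r v + f i y v) w\<bar> | i j y w.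
                       i \<in> {1..n} \<and> y \<in> Y \<and> w \<in> W}"
    and Delta_max: "\<And>i j y w. i \<in> {1..n} \<Longrightarrow> y \<in> Y \<Longrightarrow> w \<in> W \<Longrightarrow>
                       \<bar>partial_deriv j (\<lambda>v. r v + f i y v) w\<bar> \<le> Delta"
  shows "(\<forall>w1\<in>W. \<forall>w2\<in>W. norm (w1 - w2) \<le> 2 * sqrt (real CARD('D)) * Delta / mu)
       \<and> (\<forall>i\<in>{1..n}. \<forall>w\<in>W. \<bar>g i w\<bar> \<le> 2 * real CARD('D) * Delta\<^sup>2 / mu)"
proof -
  obtain i0 where i0: "i0 \<in> {1..n}" and "0 \<le> Delta"
    using Delta_mem by auto
  define G where "G = sqrt (real CARD('D)) * Delta"
  have g_lip: "G-lipschitz_on W (g i)" if "i \<in> {1..n}" for i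
  proof -
    have "g i w = Max ((\<lambda>y. r w + f i y w) ` Y)" for w
      using Max_add_commute[OF Y_fin Y_ne, of "\<lambda>y. f i y w" "r w"] by (simp add: g_def add.commute)
    then have g_eq: "g i = (\<lambda>w. Max ((\<lambda>y. r w + f i y w) ` Y))" ..
    show ?thesis
      unfolding g_eq G_def using Y_fin Y_ne \<open>0 \<le> Delta\<close> that r_diff f_diff W_conv Delta_max
      by (intro lipschitz_on_Max_image lipschitz_on_partial_deriv_bound)
        auto
  qed
  have diam: "norm (x - z) \<le> 2 * G / mu" if "x \<in> W" "z \<in> W" for x z
    using strongly_convex_on_lipschitz_diameter[OF W_conv g_sc[OF i0] g_lip[OF i0] mu_pos that] .
  have "\<bar>g i w\<bar> \<le> G * (2 * G / mu)" if "i \<in> {1..n}" "w \<in> W" for i w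
    using lipschitz_on_normD[OF g_lip \<open>w \<in> W\<close> w0(1)] w0(2) that
      mult_left_mono[OF diam[OF \<open>w \<in> W\<close> w0(1)] lipschitz_on_nonneg[OF g_lip]] by force
  then show ?thesis
    using diam \<open>0 \<le> Delta\<close> by (simp add: G_def power2_eq_square field_simps)
qed

end
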